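(* Fix a policy (choosing $A_t$ as a function of the observations available before round $t$) and two parameter vectors $\theta,\theta'\in(0,1)^K$ sharing the same delay CDF $\tau$. Let $\ell_T$ be the log-likelihood ratio $\log\big(p_\theta(\mathcal O_T)/p_{\theta'}(\mathcal O_T)\big)$ of all observations $\mathcal O_T$ collected up to round $T$. In the censored model with threshold $m$, \[ \mathbb{E}_\theta[\ell_T]=\mathbb{E}_\theta\Big[\sum_{s=1}^{T-m}d(\theta_{A_s}\tau_m,\theta'_{A_s}\tau_m)+\sum_{s=T-m+1}^{T}d(\theta_{A_s}\tau_{T-s},\theta'_{A_s}\tau_{T-s})\Big], \] and in the uncensored model, \[ \mathbb{E}_\theta[\ell_T]=\mathbb{E}_\theta\Big[\sum_{s=1}^{T}d(\theta_{A_s}\tau_{T-s},\theta'_{A_s}\tau_{T-s})\Big]. \]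
   Context: Delayed-feedback bandit model: $K$ arms with conversion rates $\theta_1,\dots,\theta_K$; a delay distribution on $\mathbb{N}$ with CDF $\tau_d=\mathbb{P}(D\le d)$. At each round $t$ the learner picks $A_t$ based on past observations; this triggers, conditionally independently given the past, $C_t\sim\mathrm{Bernoulli}(\theta_{A_t})$ and $D_t\sim\tau$. Let $X_{s,t}=C_s\mathbf{1}\{D_s\le t-s\}$ for $s\le t$. Uncensored model: at round $t$ the learner observes all $X_{s,t}$, $1\le s\le t$; so the observations up to round $T$ are $(X_{s,t})_{1\le s\le t\le T}$. Censored model with threshold $m\ge1$: at round $t$ the learner observes $X_{s,t}$ only for $t-m\le s\le t$; so the observations up to $T$ are $(X_{s,t})_{1\le t\le T,\,t-m\le s\le t}$. $\mathbb{E}_\theta$ denotes expectation when the conversion rates are $\theta$. $d(p,q)=p\log(p/q)+(1-p)\log((1-p)/(1-q))$ with the convention $d(0,0)=0$. *)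

theory Defs
  imports "HOL-Probability.Probability"
begin

text \<open>Bernoulli KL divergence d(p,q); note that in HOL 0 * ln(0/0) = 0, so d(0,0) = 0.\<close>
definition bkl :: "real \<Rightarrow> real \<Rightarrow> real" where
  "bkl p q = p * ln (p / q) + (1 - p) * ln ((1 - p) / (1 - q))"

definition delay_cdf :: "nat pmf \<Rightarrow> nat \<Rightarrow> real" where
  "delay_cdf tau d = measure_pmf.prob tau {..d}"

text \<open>History of the first t rounds: list position s-1 holds (A_s, C_s, D_s).\<close>
type_synonym 'a hist = "('a \<times> bool \<times> nat) list"

definition arm :: "'a hist \<Rightarrow> nat \<Rightarrow> 'a" where
  "arm h s = fst (h ! (s - 1))"

definition Xobs :: "'a hist \<Rightarrow> nat \<Rightarrow> nat \<Rightarrow> bool" where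
  "Xobs h s t = (fst (snd (h ! (s - 1))) \<and> snd (snd (h ! (s - 1))) \<le> t - s)"

text \<open>Visibility of X_{s,u} at round u: censored with threshold m (u - m <= s), or uncensored.\<close>
definition censored :: "nat \<Rightarrow> nat \<Rightarrow> nat \<Rightarrow> bool" where
  "censored m s u = (int u - int m \<le> int s)"

definition uncensored :: "nat \<Rightarrow> nat \<Rightarrow> bool" where
  "uncensored s u = True"

definition observations :: "(nat \<Rightarrow> nat \<Rightarrow> bool) \<Rightarrow> 'a hist \<Rightarrow> nat \<Rightarrow> (nat \<Rightarrow> nat \<Rightarrow> bool option)" where
  "observations vis h t =
     (\<lambda>s u. if 1 \<le> s \<and> s \<le> u \<and> u \<le> t \<and> vis s u then Some (Xobs h s u) else None)"

fun traj :: "(nat \<Rightarrow> nat \<Rightarrow> bool) \<Rightarrow> (nat \<Rightarrow> (nat \<Rightarrow> nat \<Rightarrow> bool option) \<Rightarrow> 'a)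
              \<Rightarrow> nat pmf \<Rightarrow> ('a \<Rightarrow> real) \<Rightarrow> nat \<Rightarrow> 'a hist pmf" where
  "traj vis pol tau theta 0 = return_pmf []"
| "traj vis pol tau theta (Suc t) =
     bind_pmf (traj vis pol tau theta t) (\<lambda>h.
       let a = pol (Suc t) (observations vis h t) in
       bind_pmf (bernoulli_pmf (theta a)) (\<lambda>c.
         map_pmf (\<lambda>d. h @ [(a, c, d)]) tau))"

definition obs_law :: "(nat \<Rightarrow> nat \<Rightarrow> bool) \<Rightarrow> (nat \<Rightarrow> (nat \<Rightarrow> nat \<Rightarrow> bool option) \<Rightarrow> 'a)
              \<Rightarrow> nat pmf \<Rightarrow> ('a \<Rightarrow> real) \<Rightarrow> nat \<Rightarrow> (nat \<Rightarrow> nat \<Rightarrow> bool option) pmf" where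
  "obs_law vis pol tau theta T = map_pmf (\<lambda>h. observations vis h T) (traj vis pol tau theta T)"

definition llr :: "(nat \<Rightarrow> nat \<Rightarrow> bool) \<Rightarrow> (nat \<Rightarrow> (nat \<Rightarrow> nat \<Rightarrow> bool option) \<Rightarrow> 'a)
              \<Rightarrow> nat pmf \<Rightarrow> ('a \<Rightarrow> real) \<Rightarrow> ('a \<Rightarrow> real) \<Rightarrow> nat \<Rightarrow> 'a hist \<Rightarrow> real" where
  "llr vis pol tau theta theta' T h =
     ln (pmf (obs_law vis pol tau theta T) (observations vis h T)
         / pmf (obs_law vis pol tau theta' T) (observations vis h T))"

end

theory Submission
  imports Defs
begin

text \<open>For a round s and a time u \<le> T, whether X_{s,u} is observed depends only on whether the
  elapsed time u - s lies in a window [0, L s] (L s = min m (T - s) when censored,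
  L s = T - s otherwise). Hence O_T is an injective image of the list of "revealed delays"
  (None, or the delay D_s if C_s holds and D_s \<le> L s). That list is generated round by round:
  given its prefix, round s draws the revealed delay from a law depending on theta only
  through the arm chosen, with P(None) = 1 - theta_{A_s} tau_{L s} and
  P(Some d) = theta_{A_s} P(D = d). The chain rule for KL divergence of such sequential laws
  then gives the expected log-likelihood ratio as the expected sum of per-round divergences,
  each equal to d(theta_{A_s} tau_{L s}, theta'_{A_s} tau_{L s}).\<close>

lemma expectation_bind_pmf_finite:
  fixes g :: "'b \<Rightarrow> real"
  assumes "finite (set_pmf p)" "\<And>x. x \<in> set_pmf p \<Longrightarrow> finite (set_pmf (f x))"
  shows "measure_pmf.expectation (bind_pmf p f) g
       = measure_pmf.expectation p (\<lambda>x. measure_pmf.expectation (f x) g)"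
proof -
  have "measure_pmf.expectation (bind_pmf p f) g
      = (\<Sum>a\<in>set_pmf p. pmf p a *\<^sub>R measure_pmf.expectation (f a) g)"
    using assms by (intro pmf_expectation_bind) auto
  also have "\<dots> = measure_pmf.expectation p (\<lambda>x. measure_pmf.expectation (f x) g)"
    using assms by (subst integral_measure_pmf[of "set_pmf p"]) auto
  finally show ?thesis .
qed

lemma pmf_map_pmf_inj_on:
  assumes "inj_on f V" "set_pmf M \<subseteq> V" "x \<in> V"
  shows "pmf (map_pmf f M) (f x) = pmf M x"
proof -
  have "pmf (map_pmf f M) (f x) = measure M (f -` {f x} \<inter> set_pmf M)"
    by (simp add: pmf_map measure_Int_set_pmf)
  also have "f -` {f x} \<inter> set_pmf M = {x} \<inter> set_pmf M"
    using assms by (auto dest: inj_onD)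
  finally show ?thesis
    by (simp add: measure_Int_set_pmf measure_pmf_single)
qed

subsection \<open>Chain rule for sequentially generated lists\<close>

fun seq_pmf :: "('b list \<Rightarrow> 'b pmf) \<Rightarrow> nat \<Rightarrow> 'b list pmf" where
  "seq_pmf K 0 = return_pmf []"
| "seq_pmf K (Suc k) = bind_pmf (seq_pmf K k) (\<lambda>xs. map_pmf (\<lambda>x. xs @ [x]) (K xs))"

definition KL_pmf :: "'b pmf \<Rightarrow> 'b pmf \<Rightarrow> real" where
  "KL_pmf P Q = measure_pmf.expectation P (\<lambda>x. ln (pmf P x / pmf Q x))"

lemma length_seq_pmf: "xs \<in> set_pmf (seq_pmf K k) \<Longrightarrow> length xs = k"
  by (induction k arbitrary: xs) auto

lemma finite_set_seq_pmf: "(\<And>xs. finite (set_pmf (K xs))) \<Longrightarrow> finite (set_pmf (seq_pmf K k))"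
  by (induction k) auto

lemma set_seq_pmf_mono:
  "(\<And>xs. set_pmf (P xs) \<subseteq> set_pmf (Q xs)) \<Longrightarrow> set_pmf (seq_pmf P k) \<subseteq> set_pmf (seq_pmf Q k)"
  by (induction k) (auto, blast)

lemma pmf_seq_pmf_snoc:
  assumes "length xs = k"
  shows "pmf (seq_pmf K (Suc k)) (xs @ [x]) = pmf (seq_pmf K k) xs * pmf (K xs) x"
proof -
  have "pmf (map_pmf (\<lambda>x. ys @ [x]) (K ys)) (xs @ [x]) = indicator {xs} ys * pmf (K xs) x" for ys
  proof (cases "ys = xs")
    case True
    have "inj (\<lambda>x. xs @ [x])" by (auto simp: inj_def)
    then show ?thesis using True pmf_map_inj'[of "\<lambda>x. xs @ [x]" "K xs" x] by simp
  next
    case False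
    then have "xs @ [x] \<notin> set_pmf (map_pmf (\<lambda>x. ys @ [x]) (K ys))" by auto
    then show ?thesis using False by (simp add: pmf_eq_0_set_pmf del: set_map_pmf)
  qed
  then show ?thesis
    by (simp add: pmf_bind measure_pmf_single)
qed

lemma log_ratio_seq_pmf_snoc:
  assumes "xs \<in> set_pmf (seq_pmf P k)" "x \<in> set_pmf (P xs)"
    and sub: "\<And>xs. set_pmf (P xs) \<subseteq> set_pmf (Q xs)"
  shows "ln (pmf (seq_pmf P (Suc k)) (xs @ [x]) / pmf (seq_pmf Q (Suc k)) (xs @ [x]))
       = ln (pmf (seq_pmf P k) xs / pmf (seq_pmf Q k) xs) + ln (pmf (P xs) x / pmf (Q xs) x)"
proof -
  have len: "length xs = k" using length_seq_pmf[OF assms(1)] .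
  have "pmf (seq_pmf P k) xs > 0" "pmf (P xs) x > 0"
    using assms(1,2) by (simp_all add: pmf_positive)
  moreover have "pmf (seq_pmf Q k) xs > 0" "pmf (Q xs) x > 0"
    using set_seq_pmf_mono[of P Q k, OF sub] assms(1,2) sub[of xs] by (auto simp: pmf_positive)
  ultimately show ?thesis
    unfolding pmf_seq_pmf_snoc[OF len, of P] pmf_seq_pmf_snoc[OF len, of Q]
    by (simp add: ln_div ln_mult del: seq_pmf.simps)
qed

lemma KL_seq_pmf_chain_rule:
  assumes fin: "\<And>xs. finite (set_pmf (P xs))"
    and sub: "\<And>xs. set_pmf (P xs) \<subseteq> set_pmf (Q xs)"
  shows "measure_pmf.expectation (seq_pmf P k) (\<lambda>xs. ln (pmf (seq_pmf P k) xs / pmf (seq_pmf Q k) xs))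
       = measure_pmf.expectation (seq_pmf P k) (\<lambda>xs. \<Sum>i<k. KL_pmf (P (take i xs)) (Q (take i xs)))"
proof (induction k)
  case 0
  then show ?case by simp
next
  case (Suc k)
  let ?E = "measure_pmf.expectation (seq_pmf P k)"
  let ?R = "\<lambda>xs. ln (pmf (seq_pmf P k) xs / pmf (seq_pmf Q k) xs)"
  let ?S = "\<lambda>xs. \<Sum>i<k. KL_pmf (P (take i xs)) (Q (take i xs))"
  have finS: "finite (set_pmf (seq_pmf P k))" by (rule finite_set_seq_pmf[OF fin])
  have int: "integrable (measure_pmf (seq_pmf P k)) f" for f :: "_ \<Rightarrow> real"
    using finS by (rule integrable_measure_pmf_finite)
  have step: "measure_pmf.expectation (P xs)
        (\<lambda>x. ln (pmf (seq_pmf P (Suc k)) (xs @ [x]) / pmf (seq_pmf Q (Suc k)) (xs @ [x])))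
      = ?R xs + KL_pmf (P xs) (Q xs)" if xs: "xs \<in> set_pmf (seq_pmf P k)" for xs
  proof -
    have "measure_pmf.expectation (P xs)
          (\<lambda>x. ln (pmf (seq_pmf P (Suc k)) (xs @ [x]) / pmf (seq_pmf Q (Suc k)) (xs @ [x])))
        = measure_pmf.expectation (P xs) (\<lambda>x. ?R xs + ln (pmf (P xs) x / pmf (Q xs) x))"
      using log_ratio_seq_pmf_snoc[OF xs _ sub] by (intro integral_cong_AE AE_pmfI) auto
    also have "\<dots> = ?R xs + KL_pmf (P xs) (Q xs)"
      unfolding KL_pmf_def using fin[of xs]
      by (subst Bochner_Integration.integral_add) (auto intro: integrable_measure_pmf_finite)
    finally show ?thesis .
  qed
  have sum_snoc: "(\<Sum>i<Suc k. KL_pmf (P (take i (xs @ [x]))) (Q (take i (xs @ [x]))))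
      = ?S xs + KL_pmf (P xs) (Q xs)" if "xs \<in> set_pmf (seq_pmf P k)" for xs x
    using length_seq_pmf[OF that] by (simp add: lessThan_Suc)
  have "measure_pmf.expectation (seq_pmf P (Suc k))
          (\<lambda>xs. ln (pmf (seq_pmf P (Suc k)) xs / pmf (seq_pmf Q (Suc k)) xs))
      = ?E (\<lambda>xs. ?R xs + KL_pmf (P xs) (Q xs))"
    using finS fin step by (simp add: expectation_bind_pmf_finite integral_cong_AE AE_pmfI)
  also have "\<dots> = ?E ?R + ?E (\<lambda>xs. KL_pmf (P xs) (Q xs))"
    by (rule Bochner_Integration.integral_add[OF int int])
  also have "\<dots> = ?E (\<lambda>xs. ?S xs + KL_pmf (P xs) (Q xs))"
    using Suc.IH by (simp add: Bochner_Integration.integral_add[OF int int])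
  also have "\<dots> = measure_pmf.expectation (seq_pmf P (Suc k))
                   (\<lambda>xs. \<Sum>i<Suc k. KL_pmf (P (take i xs)) (Q (take i xs)))"
    using finS fin sum_snoc by (simp add: expectation_bind_pmf_finite integral_cong_AE AE_pmfI)
  finally show ?case .
qed

subsection \<open>One round: a conversion revealed within a deadline\<close>

definition revealed_delay_pmf :: "real \<Rightarrow> nat pmf \<Rightarrow> nat \<Rightarrow> nat option pmf" where
  "revealed_delay_pmf p tau L =
     bind_pmf (bernoulli_pmf p) (\<lambda>c. map_pmf (\<lambda>d. if c \<and> d \<le> L then Some d else None) tau)"

lemma delay_cdf_eq_sum: "delay_cdf tau L = (\<Sum>j\<le>L. pmf tau j)"
  unfolding delay_cdf_def by (simp add: measure_measure_pmf_finite)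

lemma delay_cdf_bounds: "0 \<le> delay_cdf tau L" "delay_cdf tau L \<le> 1"
  unfolding delay_cdf_def by auto

lemma pmf_revealed_delay_None:
  assumes "0 \<le> p" "p \<le> 1"
  shows "pmf (revealed_delay_pmf p tau L) None = 1 - p * delay_cdf tau L"
proof -
  have "(\<lambda>d. if d \<le> L then Some d else None) -` {None} = UNIV - {..L}" by auto
  then have "pmf (map_pmf (\<lambda>d. if d \<le> L then Some d else None) tau) None = 1 - delay_cdf tau L"
    unfolding pmf_map delay_cdf_def using measure_pmf.prob_compl[of "{..L}" tau] by simp
  then show ?thesis
    using assms unfolding revealed_delay_pmf_def pmf_bind by (simp add: ring_distribs)
qed

lemma pmf_revealed_delay_Some:
  assumes "0 \<le> p" "p \<le> 1"
  shows "pmf (revealed_delay_pmf p tau L) (Some j) = (if j \<le> L then p * pmf tau j else 0)"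
proof -
  have "(\<lambda>d. if d \<le> L then Some d else None) -` {Some j} = (if j \<le> L then {j} else {})"
    by (auto split: if_splits)
  then have "pmf (map_pmf (\<lambda>d. if d \<le> L then Some d else None) tau) (Some j)
           = (if j \<le> L then pmf tau j else 0)"
    unfolding pmf_map by (simp add: measure_pmf_single)
  then show ?thesis
    using assms unfolding revealed_delay_pmf_def pmf_bind by simp
qed

lemma set_revealed_delay_pmf: "set_pmf (revealed_delay_pmf p tau L) \<subseteq> insert None (Some ` {..L})"
  unfolding revealed_delay_pmf_def by (auto split: if_splits)

lemma finite_set_revealed_delay_pmf: "finite (set_pmf (revealed_delay_pmf p tau L))"
  using set_revealed_delay_pmf by (rule finite_subset) auto

lemma set_revealed_delay_pmf_mono:
  assumes "0 < p" "p < 1" "0 < q" "q < 1"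
  shows "set_pmf (revealed_delay_pmf p tau L) \<subseteq> set_pmf (revealed_delay_pmf q tau L)"
proof
  fix x assume x: "x \<in> set_pmf (revealed_delay_pmf p tau L)"
  show "x \<in> set_pmf (revealed_delay_pmf q tau L)"
  proof (cases x)
    case None
    have "q * delay_cdf tau L \<le> q * 1"
      using delay_cdf_bounds[of tau L] assms by (intro mult_left_mono) auto
    then have "q * delay_cdf tau L < 1" using assms by linarith
    then show ?thesis using None assms by (simp add: set_pmf_iff pmf_revealed_delay_None)
  next
    case (Some j)
    then have "j \<le> L" "pmf tau j \<noteq> 0"
      using x assms by (auto simp: set_pmf_iff pmf_revealed_delay_Some split: if_splits)
    then show ?thesis using Some assms by (simp add: set_pmf_iff pmf_revealed_delay_Some)
  qed
qed

lemma KL_revealed_delay_pmf: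
  assumes "0 < p" "p < 1" "0 < q" "q < 1"
  shows "KL_pmf (revealed_delay_pmf p tau L) (revealed_delay_pmf q tau L)
       = bkl (p * delay_cdf tau L) (q * delay_cdf tau L)"
proof -
  let ?P = "revealed_delay_pmf p tau L" and ?Q = "revealed_delay_pmf q tau L"
  let ?f = "\<lambda>x. ln (pmf ?P x / pmf ?Q x) * pmf ?P x"
  define t where "t = delay_cdf tau L"
  have "KL_pmf ?P ?Q = (\<Sum>x\<in>insert None (Some ` {..L}). ?f x)"
    unfolding KL_pmf_def using set_revealed_delay_pmf by (intro integral_measure_pmf_real) auto
  also have "\<dots> = ?f None + (\<Sum>j\<le>L. ?f (Some j))"
    by (simp add: sum.reindex)
  also have "(\<Sum>j\<le>L. ?f (Some j)) = (\<Sum>j\<le>L. ln (p / q) * p * pmf tau j)"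
    using assms by (intro sum.cong) (auto simp: pmf_revealed_delay_Some)
  also have "\<dots> = ln (p / q) * p * t"
    by (simp add: t_def delay_cdf_eq_sum sum_distrib_left)
  finally have KL: "KL_pmf ?P ?Q = ln ((1 - p * t) / (1 - q * t)) * (1 - p * t) + ln (p / q) * p * t"
    using assms by (simp add: pmf_revealed_delay_None t_def)
  show ?thesis
  proof (cases "t = 0")
    case True
    then show ?thesis unfolding KL by (simp add: bkl_def t_def[symmetric])
  next
    case False
    then have "ln (p * t / (q * t)) = ln (p / q)" by simp
    then show ?thesis unfolding KL t_def[symmetric] bkl_def by (simp add: algebra_simps)
  qed
qed

subsection \<open>The revealed delays are a sufficient statistic\<close>

definition revealed :: "(nat \<Rightarrow> nat) \<Rightarrow> nat \<Rightarrow> 'a \<times> bool \<times> nat \<Rightarrow> nat option" where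
  "revealed L s x = (if fst (snd x) \<and> snd (snd x) \<le> L s then Some (snd (snd x)) else None)"

definition revealed_delays :: "(nat \<Rightarrow> nat) \<Rightarrow> nat \<Rightarrow> 'a hist \<Rightarrow> nat option list" where
  "revealed_delays L k h = map (\<lambda>i. revealed L (Suc i) (h ! i)) [0..<k]"

definition observations_of_delays :: "(nat \<Rightarrow> nat \<Rightarrow> bool) \<Rightarrow> nat \<Rightarrow> nat option list
      \<Rightarrow> (nat \<Rightarrow> nat \<Rightarrow> bool option)" where
  "observations_of_delays vis t es = (\<lambda>s u. if 1 \<le> s \<and> s \<le> u \<and> u \<le> t \<and> vis s u
      then Some (case es ! (s - 1) of None \<Rightarrow> False | Some d \<Rightarrow> d \<le> u - s) else None)"

definition delay_kernel :: "(nat \<Rightarrow> nat \<Rightarrow> bool) \<Rightarrow> (nat \<Rightarrow> (nat \<Rightarrow> nat \<Rightarrow> bool option) \<Rightarrow> 'a)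
      \<Rightarrow> nat pmf \<Rightarrow> ('a \<Rightarrow> real) \<Rightarrow> (nat \<Rightarrow> nat) \<Rightarrow> nat option list \<Rightarrow> nat option pmf" where
  "delay_kernel vis pol tau theta L es =
     revealed_delay_pmf (theta (pol (Suc (length es)) (observations_of_delays vis (length es) es)))
       tau (L (Suc (length es)))"

definition visibility_window :: "(nat \<Rightarrow> nat \<Rightarrow> bool) \<Rightarrow> (nat \<Rightarrow> nat) \<Rightarrow> nat \<Rightarrow> bool" where
  "visibility_window vis L T \<longleftrightarrow>
     (\<forall>s u. 1 \<le> s \<longrightarrow> s \<le> T \<longrightarrow> ((s \<le> u \<and> u \<le> T \<and> vis s u) \<longleftrightarrow> (s \<le> u \<and> u - s \<le> L s)))"

definition delay_records :: "(nat \<Rightarrow> nat) \<Rightarrow> nat \<Rightarrow> nat option list set" where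
  "delay_records L T = {es. length es = T \<and> (\<forall>i<T. \<forall>d. es ! i = Some d \<longrightarrow> d \<le> L (Suc i))}"

lemma visibility_windowD:
  "visibility_window vis L T \<Longrightarrow> 1 \<le> s \<Longrightarrow> s \<le> T
    \<Longrightarrow> (s \<le> u \<and> u \<le> T \<and> vis s u) \<longleftrightarrow> (s \<le> u \<and> u - s \<le> L s)"
  unfolding visibility_window_def by blast

lemma visibility_window_censored: "visibility_window (censored m) (\<lambda>s. min m (T - s)) T"
  unfolding visibility_window_def censored_def by auto

lemma visibility_window_uncensored: "visibility_window uncensored (\<lambda>s. T - s) T"
  unfolding visibility_window_def uncensored_def by auto

lemma length_revealed_delays [simp]: "length (revealed_delays L k h) = k"
  by (simp add: revealed_delays_def)

lemma nth_revealed_delays: "i < k \<Longrightarrow> revealed_delays L k h ! i = revealed L (Suc i) (h ! i)"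
  by (simp add: revealed_delays_def)

lemma take_revealed_delays: "i \<le> k \<Longrightarrow> take i (revealed_delays L k h) = revealed_delays L i h"
  by (simp add: revealed_delays_def take_map)

lemma revealed_delays_snoc:
  "length h = k \<Longrightarrow> revealed_delays L (Suc k) (h @ [x]) = revealed_delays L k h @ [revealed L (Suc k) x]"
  by (auto simp: revealed_delays_def nth_append)

lemma revealed_delays_in_records: "revealed_delays L T h \<in> delay_records L T"
  unfolding delay_records_def by (auto simp: nth_revealed_delays revealed_def split: if_splits)

lemma observations_eq_of_delays:
  assumes "visibility_window vis L T" "t \<le> T"
  shows "observations vis h t = observations_of_delays vis t (revealed_delays L t h)"
proof (intro ext)
  fix s u
  show "observations vis h t s u = observations_of_delays vis t (revealed_delays L t h) s u"
  proof (cases "1 \<le> s \<and> s \<le> u \<and> u \<le> t \<and> vis s u")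
    case True
    then have "u - s \<le> L s" using visibility_windowD[OF assms(1), of s u] assms(2) by auto
    moreover have "revealed_delays L t h ! (s - 1) = revealed L s (h ! (s - 1))"
      using True by (subst nth_revealed_delays) auto
    ultimately show ?thesis using True
      unfolding observations_def observations_of_delays_def Xobs_def revealed_def
      by (auto split: option.splits)
  next
    case False
    then show ?thesis unfolding observations_def observations_of_delays_def by auto
  qed
qed

lemma observations_of_delays_detects_conversion:
  assumes "visibility_window vis L T" "es \<in> delay_records L T" "es' \<in> delay_records L T"
    and "observations_of_delays vis T es = observations_of_delays vis T es'"
    and "i < T" "es ! i = Some d"
  shows "\<exists>d'. es' ! i = Some d' \<and> d' \<le> d"
proof -
  have "d \<le> L (Suc i)" using assms(2,5,6) unfolding delay_records_def by auto
  then have vis: "Suc i + d \<le> T \<and> vis (Suc i) (Suc i + d)"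
    using visibility_windowD[OF assms(1), of "Suc i" "Suc i + d"] assms(5) by auto
  then have "observations_of_delays vis T es (Suc i) (Suc i + d) = Some True"
    using assms(6) by (simp add: observations_of_delays_def)
  then have "observations_of_delays vis T es' (Suc i) (Suc i + d) = Some True"
    using assms(4) by simp
  then show ?thesis
    using vis by (auto simp: observations_of_delays_def split: option.splits)
qed

lemma inj_on_observations_of_delays:
  assumes "visibility_window vis L T"
  shows "inj_on (observations_of_delays vis T) (delay_records L T)"
proof (rule inj_onI)
  fix es es' assume es: "es \<in> delay_records L T" and es': "es' \<in> delay_records L T"
    and eq: "observations_of_delays vis T es = observations_of_delays vis T es'"
  note detect = observations_of_delays_detects_conversion[OF assms]
  show "es = es'"
  proof (rule nth_equalityI)
    show len: "length es = length es'" using es es' by (simp add: delay_records_def)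
    fix i assume "i < length es"
    then have i: "i < T" using es by (simp add: delay_records_def)
    show "es ! i = es' ! i"
    proof (cases "es ! i")
      case None
      then show ?thesis using detect[OF es' es eq[symmetric] i] by (cases "es' ! i") auto
    next
      case (Some d)
      then obtain d' where d': "es' ! i = Some d'" "d' \<le> d"
        using detect[OF es es' eq i] by auto
      then have "d \<le> d'" using detect[OF es' es eq[symmetric] i d'(1)] Some by auto
      then show ?thesis using Some d' by simp
    qed
  qed
qed

subsection \<open>The law of the revealed delays\<close>

lemma length_traj: "h \<in> set_pmf (traj vis pol tau theta k) \<Longrightarrow> length h = k"
  by (induction k arbitrary: h) (auto simp: Let_def)

lemma observations_append: "t \<le> length h \<Longrightarrow> observations vis (h @ xs) t = observations vis h t"
  unfolding observations_def Xobs_def by (intro ext) (auto simp: nth_append)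

lemma arm_traj:
  assumes "h \<in> set_pmf (traj vis pol tau theta k)" "1 \<le> s" "s \<le> k"
  shows "arm h s = pol s (observations vis h (s - 1))"
  using assms
proof (induction k arbitrary: h)
  case 0
  then show ?case by simp
next
  case (Suc k)
  then obtain h0 c d where h0: "h0 \<in> set_pmf (traj vis pol tau theta k)"
    and h: "h = h0 @ [(pol (Suc k) (observations vis h0 k), c, d)]"
    by (auto simp: Let_def)
  have len: "length h0 = k" using length_traj[OF h0] .
  show ?case
  proof (cases "s = Suc k")
    case True
    then show ?thesis using h len observations_append[of k h0 vis] by (simp add: arm_def nth_append)
  next
    case False
    then have "s \<le> k" using Suc.prems by auto
    then have "arm h s = arm h0 s" "observations vis h (s - 1) = observations vis h0 (s - 1)"
      using h len Suc.prems(2) observations_append[of "s - 1" h0 vis] by (auto simp: arm_def nth_append)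
    then show ?thesis using Suc.IH[OF h0 Suc.prems(2) \<open>s \<le> k\<close>] by simp
  qed
qed

lemma revealed_delays_traj:
  assumes "visibility_window vis L T" "k \<le> T"
  shows "map_pmf (revealed_delays L k) (traj vis pol tau theta k) = seq_pmf (delay_kernel vis pol tau theta L) k"
  using assms(2)
proof (induction k)
  case 0
  then show ?case by (simp add: revealed_delays_def)
next
  case (Suc k)
  let ?K = "delay_kernel vis pol tau theta L"
  have "map_pmf (revealed_delays L (Suc k)) (traj vis pol tau theta (Suc k))
      = bind_pmf (traj vis pol tau theta k)
          (\<lambda>h. map_pmf (\<lambda>x. revealed_delays L k h @ [x]) (?K (revealed_delays L k h)))"
    unfolding traj.simps map_bind_pmf
  proof (rule bind_pmf_cong[OF refl])
    fix h assume h: "h \<in> set_pmf (traj vis pol tau theta k)"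
    have len: "length h = k" using length_traj[OF h] .
    have obs: "observations_of_delays vis k (revealed_delays L k h) = observations vis h k"
      using observations_eq_of_delays[OF assms(1), of k h] Suc.prems by simp
    show "map_pmf (revealed_delays L (Suc k)) (let a = pol (Suc k) (observations vis h k)
            in bernoulli_pmf (theta a) \<bind> (\<lambda>c. map_pmf (\<lambda>d. h @ [(a, c, d)]) tau))
        = map_pmf (\<lambda>x. revealed_delays L k h @ [x]) (?K (revealed_delays L k h))"
      unfolding delay_kernel_def revealed_delay_pmf_def Let_def length_revealed_delays obs
        map_bind_pmf map_pmf_comp revealed_delays_snoc[OF len]
      by (intro bind_pmf_cong map_pmf_cong refl) (simp add: revealed_def)
  qed
  also have "\<dots> = bind_pmf (map_pmf (revealed_delays L k) (traj vis pol tau theta k))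
                   (\<lambda>xs. map_pmf (\<lambda>x. xs @ [x]) (?K xs))"
    by (simp add: bind_map_pmf)
  also have "\<dots> = seq_pmf ?K (Suc k)"
    using Suc by simp
  finally show ?case .
qed

lemma pmf_obs_law_eq_seq_pmf:
  assumes "visibility_window vis L T"
  shows "pmf (obs_law vis pol tau theta T) (observations vis h T)
       = pmf (seq_pmf (delay_kernel vis pol tau theta L) T) (revealed_delays L T h)"
proof -
  let ?S = "seq_pmf (delay_kernel vis pol tau theta L) T"
  have "obs_law vis pol tau theta T
      = map_pmf (observations_of_delays vis T) (map_pmf (revealed_delays L T) (traj vis pol tau theta T))"
    unfolding obs_law_def map_pmf_comp
    by (intro map_pmf_cong refl) (rule observations_eq_of_delays[OF assms order.refl])
  then have law: "obs_law vis pol tau theta T = map_pmf (observations_of_delays vis T) ?S"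
    by (simp add: revealed_delays_traj[OF assms order.refl])
  have "set_pmf ?S \<subseteq> delay_records L T"
    using revealed_delays_traj[OF assms order.refl, of pol tau theta, symmetric]
      revealed_delays_in_records by auto
  then show ?thesis
    unfolding law observations_eq_of_delays[OF assms order.refl, of h]
    by (rule pmf_map_pmf_inj_on[OF inj_on_observations_of_delays[OF assms] _ revealed_delays_in_records])
qed

theorem expected_llr_visibility_window:
  assumes window: "visibility_window vis L T"
    and theta: "\<forall>a. 0 < theta a \<and> theta a < 1"
    and theta': "\<forall>a. 0 < theta' a \<and> theta' a < 1"
  shows "measure_pmf.expectation (traj vis pol tau theta T) (llr vis pol tau theta theta' T)
       = measure_pmf.expectation (traj vis pol tau theta T)
          (\<lambda>h. \<Sum>s = 1..T. bkl (theta (arm h s) * delay_cdf tau (L s)) (theta' (arm h s) * delay_cdf tau (L s)))"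
proof -
  let ?P = "delay_kernel vis pol tau theta L" and ?Q = "delay_kernel vis pol tau theta' L"
  let ?D = "map_pmf (revealed_delays L T) (traj vis pol tau theta T)"
  have law: "?D = seq_pmf ?P T" by (rule revealed_delays_traj[OF window order.refl])
  have KL_round: "KL_pmf (?P (take i (revealed_delays L T h))) (?Q (take i (revealed_delays L T h)))
      = bkl (theta (arm h (Suc i)) * delay_cdf tau (L (Suc i))) (theta' (arm h (Suc i)) * delay_cdf tau (L (Suc i)))"
    if h: "h \<in> set_pmf (traj vis pol tau theta T)" and i: "i < T" for h i
  proof -
    have "arm h (Suc i) = pol (Suc i) (observations_of_delays vis i (revealed_delays L i h))"
      using arm_traj[OF h, of "Suc i"] i observations_eq_of_delays[OF window, of i h] by simp
    then show ?thesis
      unfolding take_revealed_delays[OF less_imp_le[OF i]] delay_kernel_def length_revealed_delays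
      using theta theta' by (simp add: KL_revealed_delay_pmf)
  qed
  have "measure_pmf.expectation (traj vis pol tau theta T) (llr vis pol tau theta theta' T)
      = measure_pmf.expectation ?D (\<lambda>es. ln (pmf (seq_pmf ?P T) es / pmf (seq_pmf ?Q T) es))"
    unfolding llr_def pmf_obs_law_eq_seq_pmf[OF window] by simp
  also have "\<dots> = measure_pmf.expectation ?D (\<lambda>es. \<Sum>i<T. KL_pmf (?P (take i es)) (?Q (take i es)))"
    unfolding law using theta theta'
    by (intro KL_seq_pmf_chain_rule) (simp_all add: delay_kernel_def
        finite_set_revealed_delay_pmf set_revealed_delay_pmf_mono)
  also have "\<dots> = measure_pmf.expectation (traj vis pol tau theta T)
      (\<lambda>h. \<Sum>i<T. bkl (theta (arm h (Suc i)) * delay_cdf tau (L (Suc i)))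
                     (theta' (arm h (Suc i)) * delay_cdf tau (L (Suc i))))"
    using KL_round by (simp add: integral_cong_AE AE_pmfI)
  finally show ?thesis
    by (simp add: sum.atLeast1_atMost_eq)
qed

lemma sum_censored_window_split:
  fixes f :: "nat \<Rightarrow> nat \<Rightarrow> real"
  shows "(\<Sum>s = 1..T. f s (min m (T - s))) = (\<Sum>s = 1..T - m. f s m) + (\<Sum>s = T - m + 1..T. f s (T - s))"
proof -
  have "{1..T} = {1..T - m} \<union> {T - m + 1..T}" "{1..T - m} \<inter> {T - m + 1..T} = {}" by auto
  then have "(\<Sum>s = 1..T. f s (min m (T - s)))
      = (\<Sum>s = 1..T - m. f s (min m (T - s))) + (\<Sum>s = T - m + 1..T. f s (min m (T - s)))"
    by (simp add: sum.union_disjoint)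
  also have "\<dots> = (\<Sum>s = 1..T - m. f s m) + (\<Sum>s = T - m + 1..T. f s (T - s))"
    by (intro arg_cong2[where f = "(+)"] sum.cong) auto
  finally show ?thesis .
qed

theorem lemma2:
  fixes pol :: "nat \<Rightarrow> (nat \<Rightarrow> nat \<Rightarrow> bool option) \<Rightarrow> 'a::finite"
    and tau :: "nat pmf" and theta theta' :: "'a \<Rightarrow> real" and m T :: nat
  assumes "\<forall>a. 0 < theta a \<and> theta a < 1"
    and "\<forall>a. 0 < theta' a \<and> theta' a < 1"
    and "m \<ge> 1"
  shows "measure_pmf.expectation (traj (censored m) pol tau theta T)
            (llr (censored m) pol tau theta theta' T)
         = measure_pmf.expectation (traj (censored m) pol tau theta T)
            (\<lambda>h. (\<Sum>s = 1..T - m. bkl (theta (arm h s) * delay_cdf tau m)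
                                        (theta' (arm h s) * delay_cdf tau m))
               + (\<Sum>s = T - m + 1..T. bkl (theta (arm h s) * delay_cdf tau (T - s))
                                          (theta' (arm h s) * delay_cdf tau (T - s))))
       \<and> measure_pmf.expectation (traj uncensored pol tau theta T)
            (llr uncensored pol tau theta theta' T)
         = measure_pmf.expectation (traj uncensored pol tau theta T)
            (\<lambda>h. \<Sum>s = 1..T. bkl (theta (arm h s) * delay_cdf tau (T - s))
                                  (theta' (arm h s) * delay_cdf tau (T - s)))"
  using expected_llr_visibility_window[OF visibility_window_censored assms(1,2)]
    expected_llr_visibility_window[OF visibility_window_uncensored assms(1,2)]
    sum_censored_window_split[where f = "\<lambda>s l. bkl (theta (arm _ s) * delay_cdf tau l)
                                                   (theta' (arm _ s) * delay_cdf tau l)"]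
  by simp

end
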